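(* Let $(p_\lambda(\mathbf y))_{\lambda\in\mathcal P}$ be a full sequence of symmetric functions. Then $(p_\lambda)$ is of binomial type if and only if there exists a quasi-genus $G$ such that $(p_\lambda)$ is associated with $G$.
   Context: **Partitions and the order.** $\mathcal P$ is the set of integer partitions. Partitions of $n$ are totally ordered by Macdonald's reverse lexicographic order: $\lambda>\mu$ iff the first nonzero difference $\lambda_i-\mu_i$ is positive. **Full sequence.** A nonzero homogeneous symmetric function $p$ of degree $n$, written $p=\sum_\lambda c_\lambda m_\lambda$ in monomial symmetric functions, has exact degree equal to the largest $\lambda\vdash n$ with $c_\lambda\ne0$. A full sequence is a family $(p_\lambda(\mathbf y))_{\lambda\in\mathcal P}$ of homogeneous symmetric functions in $\mathbf y=(y_1,y_2,\dots)$ with each $p_\lambda$ of exact degree $\lambda$. **Vector conventions.** For a vector $\alpha$ of nonnegative integers with finite support, $p_\alpha$ (resp. $G_\alpha$) denotes the value at the partition obtained by sorting $\alpha$ into weakly decreasing order. For vectors we write $\alpha!=\prod_i\alpha_i!$ and $|\alpha|=\sum_i\alpha_i$, and $\binom{\lambda}{\alpha}=\frac{\lambda!}{\alpha!(\lambda-\alpha)!}$ for $0\le\alpha\le\lambda$ componentwise. **Binomial type.** $(p_\lambda)$ is of binomial type if, for disjoint variable sets $\mathbf y,\mathbf z$ and every $\lambda$, $$p_\lambda(\mathbf y\cup\mathbf z)=\sum_{\alpha}\binom{\lambda}{\alpha}p_\alpha(\mathbf y)\,p_{\lambda-\alpha}(\mathbf z),$$ where $\alpha$ ranges over vectors with $0\le\alpha\le\lambda$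 (viewing $\lambda=(\lambda_1,\dots,\lambda_{\ell(\lambda)})$). **Quasi-genus.** A quasi-genus is an assignment of a complex number $G_\lambda$ to each partition $\lambda$ (equivalently a functor from set partitions under relabeling to $\mathbb C$, depending only on block type), with $G_\emptyset=1$. **Association.** $(p_\lambda)$ is associated with $G$ (i.e. it enumerates $G$-enriched functions from a set partitioned by type $\lambda$ to $\{y_1,y_2,\dots\}$) if for every $\lambda$ $$p_\lambda(\mathbf y)=\sum\frac{\lambda!}{\prod_j\alpha^{(j)}!}\prod_{j\ge1}G_{\alpha^{(j)}}\,y_j^{|\alpha^{(j)}|}.$$ The sum is over families $(\alpha^{(j)})_{j\ge1}$ of vectors in $\mathbb Z_{\ge0}^{\ell(\lambda)}$, all but finitely many zero, with $\sum_j\alpha^{(j)}=\lambda$. *)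

theory Defs
  imports Complex_Main
begin

text \<open>Vectors indexed by the parts of a partition lambda are lists of length (length lambda).
  A monomial y^e in the variables y_0, y_1, ... is an exponent function e with finite support;
  a (formal) symmetric function is represented by its coefficient function on monomials.\<close>

definition is_partition :: "nat list \<Rightarrow> bool" where
  "is_partition lam \<longleftrightarrow> sorted_wrt (\<ge>) lam \<and> 0 \<notin> set lam"

definition part_get :: "nat list \<Rightarrow> nat \<Rightarrow> nat" where
  "part_get lam i = (if i < length lam then lam ! i else 0)"

definition part_gt :: "nat list \<Rightarrow> nat list \<Rightarrow> bool" where
  "part_gt mu lam \<longleftrightarrow>
     (\<exists>k. (\<forall>i<k. part_get mu i = part_get lam i) \<and> part_get mu k > part_get lam k)"

definition sort_part :: "nat list \<Rightarrow> nat list" where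
  "sort_part a = rev (sort (filter (\<lambda>x. 0 < x) a))"

type_synonym monom = "nat \<Rightarrow> nat"
type_synonym sfun = "monom \<Rightarrow> complex"

definition is_monom :: "monom \<Rightarrow> bool" where
  "is_monom e \<longleftrightarrow> finite {i. e i \<noteq> 0}"

definition monom_deg :: "monom \<Rightarrow> nat" where
  "monom_deg e = (\<Sum>i\<in>{i. e i \<noteq> 0}. e i)"

text \<open>Monomial whose exponents are the parts of lam: the leading monomial of m_lam.\<close>
definition monom_of :: "nat list \<Rightarrow> monom" where
  "monom_of lam = part_get lam"

definition homog_sym :: "nat \<Rightarrow> sfun \<Rightarrow> bool" where
  "homog_sym n f \<longleftrightarrow>
     (\<forall>e. f e \<noteq> 0 \<longrightarrow> is_monom e \<and> monom_deg e = n) \<and>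
     (\<forall>e \<sigma>. bij \<sigma> \<longrightarrow> f (e \<circ> \<sigma>) = f e)"

text \<open>Coefficient of m_mu in a symmetric function f.\<close>
definition mcoeff :: "sfun \<Rightarrow> nat list \<Rightarrow> complex" where
  "mcoeff f mu = f (monom_of mu)"

definition exact_degree :: "sfun \<Rightarrow> nat list \<Rightarrow> bool" where
  "exact_degree f lam \<longleftrightarrow> mcoeff f lam \<noteq> 0 \<and>
     (\<forall>mu. is_partition mu \<and> sum_list mu = sum_list lam \<and> part_gt mu lam \<longrightarrow> mcoeff f mu = 0)"

definition full_sequence :: "(nat list \<Rightarrow> sfun) \<Rightarrow> bool" where
  "full_sequence p \<longleftrightarrow>
     (\<forall>lam. is_partition lam \<longrightarrow> homog_sym (sum_list lam) (p lam) \<and> exact_degree (p lam) lam)"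

text \<open>Disjoint union of variable sets y \<union> z: y_i is identified with variable 2i and z_i with
  variable 2i+1; the coefficient of y^a z^b in f(y \<union> z) is f at merge a b.\<close>
definition merge_monom :: "monom \<Rightarrow> monom \<Rightarrow> monom" where
  "merge_monom a b = (\<lambda>k. if even k then a (k div 2) else b (k div 2))"

definition vec_le :: "nat list \<Rightarrow> nat list \<Rightarrow> bool" where
  "vec_le a lam \<longleftrightarrow> length a = length lam \<and> (\<forall>i<length lam. a ! i \<le> lam ! i)"

definition vec_binom :: "nat list \<Rightarrow> nat list \<Rightarrow> nat" where
  "vec_binom lam a = (\<Prod>i<length lam. (lam ! i) choose (a ! i))"

definition vec_minus :: "nat list \<Rightarrow> nat list \<Rightarrow> nat list" where
  "vec_minus lam a = map2 (-) lam a"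

definition vec_fact :: "nat list \<Rightarrow> nat" where
  "vec_fact a = (\<Prod>x\<leftarrow>a. fact x)"

definition binomial_type :: "(nat list \<Rightarrow> sfun) \<Rightarrow> bool" where
  "binomial_type p \<longleftrightarrow>
     (\<forall>lam a b. is_partition lam \<longrightarrow>
        p lam (merge_monom a b) =
          (\<Sum>\<alpha>\<in>{\<alpha>. vec_le \<alpha> lam}.
             of_nat (vec_binom lam \<alpha>) * p (sort_part \<alpha>) a * p (sort_part (vec_minus lam \<alpha>)) b))"

definition quasi_genus :: "(nat list \<Rightarrow> complex) \<Rightarrow> bool" where
  "quasi_genus G \<longleftrightarrow> G [] = 1"

text \<open>Families (alpha^(j))_j of vectors of length l(lam) with |alpha^(j)| = e_j and
  sum_j alpha^(j) = lam; these index the terms contributing to the monomial y^e.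
  (Since |alpha^(j)| = e_j, alpha^(j) = 0 whenever e_j = 0.)\<close>
definition assoc_families :: "nat list \<Rightarrow> monom \<Rightarrow> (nat \<Rightarrow> nat list) set" where
  "assoc_families lam e = {F. (\<forall>j. length (F j) = length lam \<and> sum_list (F j) = e j) \<and>
       (\<forall>i<length lam. (\<Sum>j\<in>{j. e j \<noteq> 0}. F j ! i) = lam ! i)}"

text \<open>Factors with alpha^(j) = 0 contribute G_0 = 1 and 0! = 1, so products are over supp e.\<close>
definition associated :: "(nat list \<Rightarrow> sfun) \<Rightarrow> (nat list \<Rightarrow> complex) \<Rightarrow> bool" where
  "associated p G \<longleftrightarrow>
     (\<forall>lam e. is_partition lam \<longrightarrow>
        p lam e = (if is_monom e then
          (\<Sum>F\<in>assoc_families lam e.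
             of_nat (vec_fact lam) / of_nat (\<Prod>j\<in>{j. e j \<noteq> 0}. vec_fact (F j)) *
             (\<Prod>j\<in>{j. e j \<noteq> 0}. G (sort_part (F j))))
          else 0))"

end

theory Submission
  imports Defs "HOL-Combinatorics.Permutations"
begin

(* Write p^G_v for the right-hand side of the association formula, taken for an arbitrary vector v
   instead of a partition. It depends only on the multiset of nonzero entries of v, so it agrees
   with p^G at the partition obtained by sorting v.

   Associated implies binomial type: a family (alpha^(j)) for the variables y and z merged splits
   into a family for y, with column sums alpha, and one for z, with column sums lambda - alpha,
   and lambda!/prod alpha^(j)! factors as binom(lambda, alpha) times the weights of the two halves.

   Conversely, let G_lambda be the coefficient of y^|lambda| in p_lambda, for the first variable y;
   then G_0 = 1 since p_0 = p_0^2 is nonzero. Splitting the variables into those of even and odd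
   index, the binomial identity expresses p_lambda at any monomial through monomials in variables
   of smaller index. Both p and p^G satisfy it, so they agree by induction once they agree on
   powers of the first variable, where homogeneity settles it. *)

definition monom_supp :: "monom \<Rightarrow> nat set" where
  "monom_supp e = {j. e j \<noteq> 0}"

lemma is_monom_iff_finite_supp: "is_monom e \<longleftrightarrow> finite (monom_supp e)"
  by (simp add: is_monom_def monom_supp_def)

lemma monom_deg_single_var:
  assumes "monom_supp e \<subseteq> {0}"
  shows "monom_deg e = e 0"
proof -
  have "monom_deg e = (\<Sum>j\<in>monom_supp e. e j)"
    by (simp add: monom_deg_def monom_supp_def)
  also have "\<dots> = (\<Sum>j\<in>{0}. e j)"
    using assms by (intro sum.mono_neutral_left) (auto simp: monom_supp_def)
  finally show ?thesis by simp
qed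

lemma replicate_zero_if_sum_list_eq_0:
  "sum_list (xs :: nat list) = 0 \<Longrightarrow> xs = replicate (length xs) 0"
  by (simp add: replicate_length_same)

lemma vec_fact_pos: "vec_fact x > 0"
  by (induction x) (auto simp: vec_fact_def)

lemma vec_fact_mset_cong: "mset x = mset y \<Longrightarrow> vec_fact x = vec_fact y"
  by (metis vec_fact_def mset_map prod_mset_prod_list)

lemma vec_fact_replicate_zero [simp]: "vec_fact (replicate k 0) = 1"
  by (simp add: vec_fact_def)

lemma vec_fact_append: "vec_fact (x @ y) = vec_fact x * vec_fact y"
  by (simp add: vec_fact_def)

lemma sort_part_mset_cong:
  assumes "mset x = mset y"
  shows "sort_part x = sort_part y"
proof -
  have "sort (filter (\<lambda>y. 0 < y) x) = sort (filter (\<lambda>y. 0 < y) y)"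
    by (rule properties_for_sort) (simp_all add: assms)
  then show ?thesis by (simp add: sort_part_def)
qed

lemma sort_part_append_zeros [simp]: "sort_part (x @ replicate k 0) = sort_part x"
  by (simp add: sort_part_def)

lemma mset_sort_part: "mset (sort_part x) = filter_mset (\<lambda>y. 0 < y) (mset x)"
  by (simp add: sort_part_def)

lemma is_partition_sort_part: "is_partition (sort_part x)"
  by (auto simp: is_partition_def sort_part_def sorted_wrt_rev)

lemma sort_part_partition:
  assumes "is_partition x"
  shows "sort_part x = x"
proof -
  have "sorted (rev x)" using assms by (simp add: is_partition_def sorted_wrt_rev)
  then have "sort x = rev x" by (intro properties_for_sort) auto
  moreover have "filter (\<lambda>y. 0 < y) x = x"
    using assms by (auto simp: is_partition_def filter_id_conv intro: gr0I)
  ultimately show ?thesis by (simp add: sort_part_def)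
qed

lemma length_vec_minus [simp]: "length a = length v \<Longrightarrow> length (vec_minus v a) = length v"
  by (simp add: vec_minus_def)

lemma nth_vec_minus [simp]:
  "length a = length v \<Longrightarrow> i < length v \<Longrightarrow> vec_minus v a ! i = v ! i - a ! i"
  by (simp add: vec_minus_def)

lemma vec_binom_mult_fact:
  assumes "vec_le a v"
  shows "vec_binom v a * vec_fact a * vec_fact (vec_minus v a) = vec_fact v"
proof -
  have len: "length a = length v" using assms by (simp add: vec_le_def)
  have fact_nth: "vec_fact x = (\<Prod>i<length x. fact (x ! i))" for x
    by (induction x) (simp_all add: vec_fact_def prod.lessThan_Suc_shift del: prod.lessThan_Suc)
  have "vec_binom v a * vec_fact a * vec_fact (vec_minus v a) =
     (\<Prod>i<length v. (v ! i choose a ! i) * fact (a ! i) * fact (v ! i - a ! i))"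
    by (simp add: vec_binom_def fact_nth prod.distrib len vec_minus_def)
  also have "\<dots> = (\<Prod>i<length v. fact (v ! i))"
    using assms by (intro prod.cong) (auto simp: vec_le_def binomial_fact_lemma[symmetric] mult_ac)
  finally show ?thesis by (simp add: fact_nth)
qed

lemma finite_vec_le: "finite {\<alpha>. vec_le \<alpha> v}"
proof (rule finite_subset)
  show "{\<alpha>. vec_le \<alpha> v} \<subseteq> {xs. set xs \<subseteq> {0..sum_list v} \<and> length xs = length v}"
    by (force simp: vec_le_def in_set_conv_nth intro: order.trans[OF _ elem_le_sum_list])
qed (rule finite_lists_length_eq, simp)

definition assoc_term ::
  "(nat list \<Rightarrow> complex) \<Rightarrow> nat list \<Rightarrow> monom \<Rightarrow> (nat \<Rightarrow> nat list) \<Rightarrow> complex" where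
  "assoc_term G v e F = of_nat (vec_fact v) / of_nat (\<Prod>j\<in>monom_supp e. vec_fact (F j)) *
     (\<Prod>j\<in>monom_supp e. G (sort_part (F j)))"

definition assoc_sfun :: "(nat list \<Rightarrow> complex) \<Rightarrow> nat list \<Rightarrow> sfun" where
  "assoc_sfun G v e = (if is_monom e then (\<Sum>F\<in>assoc_families v e. assoc_term G v e F) else 0)"

lemma associated_iff_assoc_sfun:
  "associated p G \<longleftrightarrow> (\<forall>lam. is_partition lam \<longrightarrow> p lam = assoc_sfun G lam)"
  by (auto simp: associated_def assoc_sfun_def assoc_term_def monom_supp_def)

lemma assoc_families_iff:
  "F \<in> assoc_families v e \<longleftrightarrow>
     (\<forall>j. length (F j) = length v \<and> sum_list (F j) = e j) \<and>
     (\<forall>i<length v. (\<Sum>j\<in>monom_supp e. F j ! i) = v ! i)"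
  by (simp add: assoc_families_def monom_supp_def)

lemma assoc_family_outside_supp:
  assumes "F \<in> assoc_families v e" and "j \<notin> monom_supp e"
  shows "F j = replicate (length v) 0"
  using assms replicate_zero_if_sum_list_eq_0[of "F j"]
  by (auto simp: assoc_families_iff monom_supp_def)

lemma assoc_family_entry_le:
  assumes "is_monom e" and F: "F \<in> assoc_families v e" and i: "i < length v"
  shows "F j ! i \<le> v ! i"
proof (cases "j \<in> monom_supp e")
  case True
  then have "F j ! i \<le> (\<Sum>j'\<in>monom_supp e. F j' ! i)"
    using assms(1) by (intro member_le_sum) (auto simp: is_monom_iff_finite_supp)
  also have "\<dots> = v ! i" using F i by (simp add: assoc_families_iff)
  finally show ?thesis .
next
  case False
  then show ?thesis using assoc_family_outside_supp[OF F] i by simp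
qed

lemma finite_assoc_families:
  assumes "is_monom e"
  shows "finite (assoc_families v e)"
proof -
  let ?S = "monom_supp e"
  let ?zero = "replicate (length v) 0"
  define B where "B j = {xs. set xs \<subseteq> {0..e j} \<and> length xs = length v}" for j
  have "finite (PiE ?S B)"
    using assms by (intro finite_PiE) (auto simp: is_monom_iff_finite_supp B_def finite_lists_length_eq)
  moreover have "assoc_families v e \<subseteq> (\<lambda>g j. if j \<in> ?S then g j else ?zero) ` PiE ?S B"
  proof
    fix F assume F: "F \<in> assoc_families v e"
    then have "restrict F ?S \<in> PiE ?S B"
      using member_le_sum_list by (fastforce simp: B_def assoc_families_iff)
    moreover have "F = (\<lambda>j. if j \<in> ?S then restrict F ?S j else ?zero)"
      using assoc_family_outside_supp[OF F] by auto
    ultimately show "F \<in> (\<lambda>g j. if j \<in> ?S then g j else ?zero) ` PiE ?S B" by blast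
  qed
  ultimately show ?thesis by (rule finite_surj)
qed

definition interleave :: "(nat \<Rightarrow> 'a) \<Rightarrow> (nat \<Rightarrow> 'a) \<Rightarrow> nat \<Rightarrow> 'a" where
  "interleave f g k = (if even k then f (k div 2) else g (k div 2))"

lemma interleave_even [simp]: "interleave f g (2 * j) = f j"
  by (simp add: interleave_def)

lemma interleave_odd [simp]: "interleave f g (Suc (2 * j)) = g j"
  by (simp add: interleave_def)

lemma interleave_evens_odds: "interleave (\<lambda>j. f (2 * j)) (\<lambda>j. f (2 * j + 1)) = f"
  by (simp add: interleave_def fun_eq_iff odd_two_times_div_two_succ)

lemma merge_monom_eq_interleave: "merge_monom = interleave"
  by (auto simp: merge_monom_def interleave_def fun_eq_iff)

lemma monom_supp_merge:
  "monom_supp (merge_monom a b) = (\<lambda>j. 2 * j) ` monom_supp a \<union> (\<lambda>j. 2 * j + 1) ` monom_supp b"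
proof (rule set_eqI)
  fix k :: nat
  show "k \<in> monom_supp (merge_monom a b) \<longleftrightarrow>
          k \<in> (\<lambda>j. 2 * j) ` monom_supp a \<union> (\<lambda>j. 2 * j + 1) ` monom_supp b"
  proof (cases "even k")
    case True
    then obtain j where "k = 2 * j" by blast
    then show ?thesis by (auto simp: monom_supp_def merge_monom_def; presburger)
  next
    case False
    then obtain j where "k = 2 * j + 1" using oddE by blast
    then show ?thesis by (auto simp: monom_supp_def merge_monom_def; presburger)
  qed
qed

lemma inj_double: "inj (\<lambda>j::nat. 2 * j)" and inj_double_Suc: "inj (\<lambda>j::nat. 2 * j + 1)"
  by (auto simp: inj_on_def)

lemma double_disjoint_double_Suc: "(\<lambda>j::nat. 2 * j) ` A \<inter> (\<lambda>j. 2 * j + 1) ` B = {}"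
  by auto presburger

lemma is_monom_merge: "is_monom (merge_monom a b) \<longleftrightarrow> is_monom a \<and> is_monom b"
  unfolding is_monom_iff_finite_supp monom_supp_merge finite_Un
  by (simp only: finite_image_iff inj_on_subset[OF inj_double] inj_on_subset[OF inj_double_Suc]
      subset_UNIV)

lemma sum_monom_supp_merge:
  assumes "is_monom a" "is_monom b"
  shows "(\<Sum>k\<in>monom_supp (merge_monom a b). f k) =
           (\<Sum>j\<in>monom_supp a. f (2 * j)) + (\<Sum>j\<in>monom_supp b. f (2 * j + 1))"
proof -
  have "sum f ((\<lambda>j. 2 * j) ` monom_supp a) = (\<Sum>j\<in>monom_supp a. f (2 * j))"
    using sum.reindex[OF inj_on_subset[OF inj_double]] by (simp add: comp_def)
  moreover have "sum f ((\<lambda>j. 2 * j + 1) ` monom_supp b) = (\<Sum>j\<in>monom_supp b. f (2 * j + 1))"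
    using sum.reindex[OF inj_on_subset[OF inj_double_Suc]] by (simp add: comp_def)
  ultimately show ?thesis
    using assms unfolding monom_supp_merge
    by (subst sum.union_disjoint[OF _ _ double_disjoint_double_Suc])
       (auto simp: is_monom_iff_finite_supp)
qed

lemma prod_monom_supp_merge:
  assumes "is_monom a" "is_monom b"
  shows "(\<Prod>k\<in>monom_supp (merge_monom a b). f k) =
           (\<Prod>j\<in>monom_supp a. f (2 * j)) * (\<Prod>j\<in>monom_supp b. f (2 * j + 1))"
proof -
  have "prod f ((\<lambda>j. 2 * j) ` monom_supp a) = (\<Prod>j\<in>monom_supp a. f (2 * j))"
    using prod.reindex[OF inj_on_subset[OF inj_double]] by (simp add: comp_def)
  moreover have "prod f ((\<lambda>j. 2 * j + 1) ` monom_supp b) = (\<Prod>j\<in>monom_supp b. f (2 * j + 1))"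
    using prod.reindex[OF inj_on_subset[OF inj_double_Suc]] by (simp add: comp_def)
  ultimately show ?thesis
    using assms unfolding monom_supp_merge
    by (subst prod.union_disjoint[OF _ _ double_disjoint_double_Suc])
       (auto simp: is_monom_iff_finite_supp)
qed

definition family_sum :: "nat \<Rightarrow> nat set \<Rightarrow> (nat \<Rightarrow> nat list) \<Rightarrow> nat list" where
  "family_sum n J F = map (\<lambda>i. \<Sum>j\<in>J. F j ! i) [0..<n]"

lemma length_family_sum [simp]: "length (family_sum n J F) = n"
  by (simp add: family_sum_def)

lemma nth_family_sum [simp]: "i < n \<Longrightarrow> family_sum n J F ! i = (\<Sum>j\<in>J. F j ! i)"
  by (simp add: family_sum_def)

lemma split_mem_assoc_families_merge:
  assumes a: "is_monom a" and b: "is_monom b" and F: "F \<in> assoc_families v (merge_monom a b)"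
  defines "\<alpha> \<equiv> family_sum (length v) (monom_supp a) (\<lambda>j. F (2 * j))"
  shows "vec_le \<alpha> v" and "(\<lambda>j. F (2 * j)) \<in> assoc_families \<alpha> a"
    and "(\<lambda>j. F (2 * j + 1)) \<in> assoc_families (vec_minus v \<alpha>) b"
proof -
  have cols: "\<alpha> ! i + (\<Sum>j\<in>monom_supp b. F (2 * j + 1) ! i) = v ! i" if "i < length v" for i
    using F that sum_monom_supp_merge[OF a b, of "\<lambda>j. F j ! i"]
    by (simp add: assoc_families_iff \<alpha>_def)
  then show "vec_le \<alpha> v"
    unfolding vec_le_def \<alpha>_def by (metis le_add1 length_family_sum)
  show "(\<lambda>j. F (2 * j)) \<in> assoc_families \<alpha> a"
    using F by (simp add: assoc_families_iff merge_monom_def \<alpha>_def)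
  have "(\<Sum>j\<in>monom_supp b. F (2 * j + 1) ! i) = v ! i - \<alpha> ! i" if "i < length v" for i
    using cols[OF that] by (metis add_diff_cancel_left')
  with F show "(\<lambda>j. F (2 * j + 1)) \<in> assoc_families (vec_minus v \<alpha>) b"
    by (simp add: assoc_families_iff merge_monom_def \<alpha>_def)
qed

lemma interleave_mem_assoc_families_merge:
  assumes a: "is_monom a" and b: "is_monom b" and "vec_le \<alpha> v"
    and F1: "F1 \<in> assoc_families \<alpha> a" and F2: "F2 \<in> assoc_families (vec_minus v \<alpha>) b"
  shows "interleave F1 F2 \<in> assoc_families v (merge_monom a b)"
proof -
  have "length \<alpha> = length v" "\<forall>i<length v. \<alpha> ! i \<le> v ! i"
    using \<open>vec_le \<alpha> v\<close> by (simp_all add: vec_le_def)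
  moreover have "sum_list (interleave F1 F2 k) = merge_monom a b k" for k
    using F1 F2 by (simp add: interleave_def merge_monom_def assoc_families_iff)
  ultimately show ?thesis
    using F1 F2 unfolding assoc_families_iff sum_monom_supp_merge[OF a b]
    by (auto simp: vec_minus_def) (simp add: interleave_def)
qed

lemma bij_betw_assoc_families_merge:
  assumes a: "is_monom a" and b: "is_monom b"
  shows "bij_betw
     (\<lambda>F. (family_sum (length v) (monom_supp a) (\<lambda>j. F (2 * j)), \<lambda>j. F (2 * j), \<lambda>j. F (2 * j + 1)))
     (assoc_families v (merge_monom a b))
     (SIGMA \<alpha>:{\<alpha>. vec_le \<alpha> v}. assoc_families \<alpha> a \<times> assoc_families (vec_minus v \<alpha>) b)"
    (is "bij_betw ?split ?A ?B")
proof (rule bij_betw_byWitness[where f'="\<lambda>(\<alpha>, F1, F2). interleave F1 F2"])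
  show "\<forall>F\<in>?A. (\<lambda>(\<alpha>, F1, F2). interleave F1 F2) (?split F) = F"
    unfolding prod.case by (intro ballI interleave_evens_odds)
  show "\<forall>t\<in>?B. ?split ((\<lambda>(\<alpha>, F1, F2). interleave F1 F2) t) = t"
  proof
    fix t assume "t \<in> ?B"
    then obtain \<alpha> F1 F2 where t: "t = (\<alpha>, F1, F2)"
      and "vec_le \<alpha> v" and "F1 \<in> assoc_families \<alpha> a" by auto
    then have "family_sum (length v) (monom_supp a) F1 = \<alpha>"
      by (intro nth_equalityI) (auto simp: vec_le_def assoc_families_iff)
    with t show "?split ((\<lambda>(\<alpha>, F1, F2). interleave F1 F2) t) = t" by simp
  qed
  show "?split ` ?A \<subseteq> ?B"
    using split_mem_assoc_families_merge[OF a b] by auto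
  show "(\<lambda>(\<alpha>, F1, F2). interleave F1 F2) ` ?B \<subseteq> ?A"
    using interleave_mem_assoc_families_merge[OF a b] by auto
qed

lemma assoc_term_merge:
  assumes a: "is_monom a" and b: "is_monom b" and le: "vec_le \<alpha> v"
  shows "assoc_term G v (merge_monom a b) (interleave F1 F2) =
           of_nat (vec_binom v \<alpha>) * assoc_term G \<alpha> a F1 * assoc_term G (vec_minus v \<alpha>) b F2"
proof -
  have "of_nat (vec_fact v) =
      (of_nat (vec_binom v \<alpha>) * of_nat (vec_fact \<alpha>) * of_nat (vec_fact (vec_minus v \<alpha>)) :: complex)"
    by (simp flip: of_nat_mult add: vec_binom_mult_fact[OF le])
  moreover have "(of_nat (\<Prod>j\<in>J. vec_fact (F j)) :: complex) \<noteq> 0" for J F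
    using vec_fact_pos by (metis of_nat_eq_0_iff prod_pos less_irrefl)
  moreover have split_prod: "(\<Prod>j\<in>monom_supp (merge_monom a b). f (interleave F1 F2 j)) =
      (\<Prod>j\<in>monom_supp a. f (F1 j)) * (\<Prod>j\<in>monom_supp b. f (F2 j))" for f :: "nat list \<Rightarrow> complex"
    by (simp add: prod_monom_supp_merge[OF a b])
  ultimately show ?thesis
    unfolding assoc_term_def of_nat_prod split_prod[of "\<lambda>x. G (sort_part x)"]
      split_prod[of "\<lambda>x. of_nat (vec_fact x)"]
    by (simp add: field_simps)
qed

lemma assoc_sfun_merge:
  "assoc_sfun G v (merge_monom a b) =
     (\<Sum>\<alpha>\<in>{\<alpha>. vec_le \<alpha> v}.
        of_nat (vec_binom v \<alpha>) * assoc_sfun G \<alpha> a * assoc_sfun G (vec_minus v \<alpha>) b)"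
proof (cases "is_monom a \<and> is_monom b")
  case False
  then show ?thesis by (auto simp: assoc_sfun_def is_monom_merge)
next
  case True
  then have a: "is_monom a" and b: "is_monom b" by auto
  let ?term = "\<lambda>(\<alpha>, F1, F2). assoc_term G v (merge_monom a b) (interleave F1 F2)"
  have "(\<Sum>F\<in>assoc_families v (merge_monom a b). assoc_term G v (merge_monom a b) F) =
      (\<Sum>t\<in>(SIGMA \<alpha>:{\<alpha>. vec_le \<alpha> v}. assoc_families \<alpha> a \<times> assoc_families (vec_minus v \<alpha>) b). ?term t)"
    by (subst sum.reindex_bij_betw[OF bij_betw_assoc_families_merge[OF a b], symmetric])
       (unfold prod.case, intro sum.cong refl arg_cong[where f="assoc_term G v (merge_monom a b)"]
         interleave_evens_odds[symmetric])
  also have "\<dots> = (\<Sum>\<alpha>\<in>{\<alpha>. vec_le \<alpha> v}. \<Sum>F1\<in>assoc_families \<alpha> a. \<Sum>F2\<in>assoc_families (vec_minus v \<alpha>) b.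
      ?term (\<alpha>, F1, F2))"
    by (subst sum.Sigma[symmetric])
       (simp_all add: finite_vec_le finite_assoc_families a b sum.cartesian_product)
  also have "\<dots> = (\<Sum>\<alpha>\<in>{\<alpha>. vec_le \<alpha> v}. \<Sum>F1\<in>assoc_families \<alpha> a. \<Sum>F2\<in>assoc_families (vec_minus v \<alpha>) b.
      of_nat (vec_binom v \<alpha>) * assoc_term G \<alpha> a F1 * assoc_term G (vec_minus v \<alpha>) b F2)"
    by (intro sum.cong refl) (simp add: assoc_term_merge[OF a b])
  also have "\<dots> = (\<Sum>\<alpha>\<in>{\<alpha>. vec_le \<alpha> v}. of_nat (vec_binom v \<alpha>) *
      (\<Sum>F1\<in>assoc_families \<alpha> a. \<Sum>F2\<in>assoc_families (vec_minus v \<alpha>) b.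
         assoc_term G \<alpha> a F1 * assoc_term G (vec_minus v \<alpha>) b F2))"
    by (simp add: sum_distrib_left mult.assoc)
  also have "\<dots> = (\<Sum>\<alpha>\<in>{\<alpha>. vec_le \<alpha> v}.
      of_nat (vec_binom v \<alpha>) * (assoc_sfun G \<alpha> a * assoc_sfun G (vec_minus v \<alpha>) b))"
    using a b by (simp add: assoc_sfun_def sum_product)
  finally show ?thesis
    using a b by (simp add: assoc_sfun_def is_monom_merge mult.assoc)
qed

lemma permute_list_inv_cancel:
  assumes "\<sigma> permutes {..<length xs}"
  shows "permute_list (inv \<sigma>) (permute_list \<sigma> xs) = xs"
    and "permute_list \<sigma> (permute_list (inv \<sigma>) xs) = xs"
  using permute_list_compose[OF permutes_inv[OF assms], of \<sigma>]
    permute_list_compose[OF assms, of "inv \<sigma>"]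
  by (simp_all add: permutes_inv_o[OF assms])

lemma permute_list_mem_assoc_families:
  assumes \<sigma>: "\<sigma> permutes {..<length v}" and F: "F \<in> assoc_families v e"
  shows "(\<lambda>j. permute_list \<sigma> (F j)) \<in> assoc_families (permute_list \<sigma> v) e"
proof -
  have \<sigma>F: "\<sigma> permutes {..<length (F j)}" for j
    using F \<sigma> by (simp add: assoc_families_iff)
  have "sum_list (permute_list \<sigma> (F j)) = sum_list (F j)" for j
    by (simp flip: sum_mset_sum_list add: mset_permute_list[OF \<sigma>F])
  moreover have "\<sigma> i < length v" if "i < length v" for i
    using permutes_in_image[OF \<sigma>] that by simp
  ultimately show ?thesis
    using F \<sigma>F permute_list_nth[OF \<sigma>] by (simp add: assoc_families_iff permute_list_nth)
qed

lemma assoc_sfun_permute_list: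
  assumes \<sigma>: "\<sigma> permutes {..<length v}"
  shows "assoc_sfun G (permute_list \<sigma> v) e = assoc_sfun G v e"
proof -
  have \<sigma>': "inv \<sigma> permutes {..<length (permute_list \<sigma> v)}"
    using permutes_inv[OF \<sigma>] by simp
  have \<sigma>F: "\<sigma> permutes {..<length (F j)}" if "F \<in> assoc_families v e" for F j
    using that \<sigma> by (simp add: assoc_families_iff)
  have \<sigma>H: "inv \<sigma> permutes {..<length (H j)}" if "H \<in> assoc_families (permute_list \<sigma> v) e" for H j
    using that \<sigma>' by (simp add: assoc_families_iff)
  have "(\<Sum>H\<in>assoc_families (permute_list \<sigma> v) e. assoc_term G (permute_list \<sigma> v) e H) =
      (\<Sum>F\<in>assoc_families v e. assoc_term G v e F)"
  proof (rule sum.reindex_bij_witness[where i="\<lambda>F j. permute_list \<sigma> (F j)"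
        and j="\<lambda>H j. permute_list (inv \<sigma>) (H j)"])
    fix H assume H: "H \<in> assoc_families (permute_list \<sigma> v) e"
    show "(\<lambda>j. permute_list \<sigma> (permute_list (inv \<sigma>) (H j))) = H"
      using H \<sigma> by (simp add: assoc_families_iff permute_list_inv_cancel)
    show "(\<lambda>j. permute_list (inv \<sigma>) (H j)) \<in> assoc_families v e"
      using permute_list_mem_assoc_families[OF \<sigma>' H] by (simp add: permute_list_inv_cancel[OF \<sigma>])
    have mset_H: "mset (permute_list (inv \<sigma>) (H j)) = mset (H j)" for j
      by (rule mset_permute_list[OF \<sigma>H[OF H]])
    have mset_v: "mset (permute_list \<sigma> v) = mset v"
      by (rule mset_permute_list[OF \<sigma>])
    show "assoc_term G v e (\<lambda>j. permute_list (inv \<sigma>) (H j)) =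
        assoc_term G (permute_list \<sigma> v) e H"
      by (simp add: assoc_term_def vec_fact_mset_cong[OF mset_v] vec_fact_mset_cong[OF mset_H]
          sort_part_mset_cong[OF mset_H])
  next
    fix F assume F: "F \<in> assoc_families v e"
    show "(\<lambda>j. permute_list (inv \<sigma>) (permute_list \<sigma> (F j))) = F"
      using \<sigma>F[OF F] by (simp add: permute_list_inv_cancel)
    show "(\<lambda>j. permute_list \<sigma> (F j)) \<in> assoc_families (permute_list \<sigma> v) e"
      by (rule permute_list_mem_assoc_families[OF \<sigma> F])
  qed
  then show ?thesis by (simp add: assoc_sfun_def)
qed

lemma assoc_family_append_zeros:
  assumes "is_monom e" and H: "H \<in> assoc_families (v @ replicate k 0) e"
  shows "H j = take (length v) (H j) @ replicate k 0"
proof -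
  have "H j ! i = 0" if "length v \<le> i" "i < length v + k" for i
    using assoc_family_entry_le[OF assms, of i j] that by (simp add: nth_append)
  moreover have "length (H j) = length v + k"
    using H by (simp add: assoc_families_iff)
  ultimately show ?thesis by (intro nth_equalityI) (auto simp: nth_append)
qed

lemma assoc_sfun_append_zeros: "assoc_sfun G (v @ replicate k 0) e = assoc_sfun G v e"
proof (cases "is_monom e")
  case False
  then show ?thesis by (simp add: assoc_sfun_def)
next
  case True
  let ?w = "v @ replicate k 0"
  note tail_zero = assoc_family_append_zeros[OF True]
  have "(\<Sum>H\<in>assoc_families ?w e. assoc_term G ?w e H) = (\<Sum>F\<in>assoc_families v e. assoc_term G v e F)"
  proof (rule sum.reindex_bij_witness[where i="\<lambda>F j. F j @ replicate k 0"
        and j="\<lambda>H j. take (length v) (H j)"])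
    fix H assume H: "H \<in> assoc_families ?w e"
    show "(\<lambda>j. take (length v) (H j) @ replicate k 0) = H"
      using tail_zero[OF H] by simp
    have sum_list_take: "sum_list (take (length v) (H j)) = sum_list (H j)" for j
      using arg_cong[OF tail_zero[OF H, of j], of sum_list] by simp
    show "(\<lambda>j. take (length v) (H j)) \<in> assoc_families v e"
      using H by (simp add: assoc_families_iff sum_list_take nth_append)
    have "vec_fact (take (length v) (H j)) = vec_fact (H j)" for j
      using arg_cong[OF tail_zero[OF H, of j], of vec_fact] by (simp add: vec_fact_append)
    moreover have "sort_part (take (length v) (H j)) = sort_part (H j)" for j
      using arg_cong[OF tail_zero[OF H, of j], of sort_part] by simp
    ultimately show "assoc_term G v e (\<lambda>j. take (length v) (H j)) = assoc_term G ?w e H"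
      by (simp add: assoc_term_def vec_fact_append)
  next
    fix F assume F: "F \<in> assoc_families v e"
    then show "(\<lambda>j. take (length v) (F j @ replicate k 0)) = F"
      by (simp add: assoc_families_iff)
    show "(\<lambda>j. F j @ replicate k 0) \<in> assoc_families ?w e"
      using F by (auto simp: assoc_families_iff nth_append)
  qed
  then show ?thesis by (simp add: assoc_sfun_def)
qed

lemma assoc_sfun_sort_part: "assoc_sfun G (sort_part v) e = assoc_sfun G v e"
proof -
  let ?zeros = "replicate (count (mset v) 0) 0"
  have "mset v = filter_mset (\<lambda>y. 0 < y) (mset v) + filter_mset (\<lambda>y. y = 0) (mset v)"
    by (rule union_filter_mset_complement[symmetric]) auto
  then have "mset v = mset (sort_part v @ ?zeros)"
    by (simp add: mset_sort_part filter_eq_replicate_mset)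
  then obtain \<sigma> where "\<sigma> permutes {..<length (sort_part v @ ?zeros)}"
    and "permute_list \<sigma> (sort_part v @ ?zeros) = v"
    by (rule mset_eq_permutation)
  then show ?thesis
    by (metis assoc_sfun_permute_list assoc_sfun_append_zeros)
qed

lemma assoc_families_single_var:
  assumes supp: "monom_supp e \<subseteq> {0}"
  shows "assoc_families v e =
           (if sum_list v = e 0 then {\<lambda>j. if j = 0 then v else replicate (length v) 0} else {})"
proof -
  let ?F0 = "\<lambda>j. if j = 0 then v else replicate (length v) 0"
  have col_sum: "(\<Sum>j\<in>monom_supp e. F j ! i) = F 0 ! i" if "\<And>j. j \<notin> monom_supp e \<Longrightarrow> F j ! i = 0"
    for F :: "nat \<Rightarrow> nat list" and i
  proof -
    have "(\<Sum>j\<in>monom_supp e. F j ! i) = (\<Sum>j\<in>{0}. F j ! i)"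
      by (rule sum.mono_neutral_left) (use supp that in auto)
    then show ?thesis by simp
  qed
  have outside: "j \<notin> monom_supp e" if "j \<noteq> 0" for j
    using supp that by auto
  have "F \<in> assoc_families v e \<longleftrightarrow> sum_list v = e 0 \<and> F = ?F0" for F
  proof
    assume F: "F \<in> assoc_families v e"
    then have "F 0 = v"
      using assoc_family_outside_supp[OF F] col_sum[of F]
      by (intro nth_equalityI) (auto simp: assoc_families_iff)
    moreover have "F j = replicate (length v) 0" if "j \<noteq> 0" for j
      using assoc_family_outside_supp[OF F outside[OF that]] .
    ultimately show "sum_list v = e 0 \<and> F = ?F0"
      using F by (auto simp: assoc_families_iff)
  next
    assume "sum_list v = e 0 \<and> F = ?F0"
    then have sum_v: "sum_list v = e 0" and F: "F = ?F0" by auto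
    have "sum_list (F j) = e j" for j
      using F sum_v outside[of j] by (simp add: monom_supp_def)
    moreover have "F j ! i = 0" if "j \<notin> monom_supp e" "i < length v" for i j
      using F sum_v that elem_le_sum_list[of i v] by (cases "j = 0") (auto simp: monom_supp_def)
    ultimately show "F \<in> assoc_families v e"
      using F by (simp add: assoc_families_iff col_sum)
  qed
  then show ?thesis by auto
qed

lemma assoc_sfun_single_var:
  assumes supp: "monom_supp e \<subseteq> {0}" and G0: "G [] = 1"
  shows "assoc_sfun G v e = (if sum_list v = e 0 then G (sort_part v) else 0)"
proof (cases "sum_list v = e 0")
  case True
  have "is_monom e"
    using supp finite_subset by (auto simp: is_monom_iff_finite_supp)
  moreover have "assoc_term G v e (\<lambda>j. if j = 0 then v else replicate (length v) 0) = G (sort_part v)"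
  proof (cases "e 0 = 0")
    case True
    then have "monom_supp e = {}" and zeros: "v = replicate (length v) 0"
      using supp \<open>sum_list v = e 0\<close> replicate_zero_if_sum_list_eq_0 by (auto simp: monom_supp_def)
    moreover have "vec_fact v = 1"
      using zeros vec_fact_replicate_zero by metis
    moreover have "sort_part v = []"
      by (subst zeros) (simp add: sort_part_def)
    ultimately show ?thesis
      using G0 by (simp add: assoc_term_def)
  next
    case False
    then have "monom_supp e = {0}" using supp by (auto simp: monom_supp_def)
    then show ?thesis using vec_fact_pos[of v] by (simp add: assoc_term_def)
  qed
  ultimately show ?thesis
    using True by (simp add: assoc_sfun_def assoc_families_single_var[OF supp])
qed (simp add: assoc_sfun_def assoc_families_single_var[OF supp])

lemma monom_merge_induct [consumes 1, case_names single_var merge]: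
  assumes "is_monom e"
    and single_var: "\<And>e. monom_supp e \<subseteq> {0} \<Longrightarrow> P e"
    and merge: "\<And>a b. is_monom a \<Longrightarrow> is_monom b \<Longrightarrow> P a \<Longrightarrow> P b \<Longrightarrow> P (merge_monom a b)"
  shows "P e"
proof -
  obtain n where "monom_supp e \<subseteq> {..<n}"
    using assms(1) by (auto simp: is_monom_iff_finite_supp finite_nat_set_iff_bounded)
  then show ?thesis
    using assms(1)
  proof (induction n arbitrary: e)
    case 0
    then show ?case by (intro single_var) auto
  next
    case (Suc n)
    show ?case
    proof (cases "monom_supp e \<subseteq> {0}")
      case True
      then show ?thesis by (rule single_var)
    next
      case False
      with Suc.prems(1) have "1 \<le> n" by auto
      let ?a = "\<lambda>j. e (2 * j)" and ?b = "\<lambda>j. e (2 * j + 1)"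
      have e: "merge_monom ?a ?b = e"
        unfolding merge_monom_eq_interleave by (rule interleave_evens_odds)
      then have "is_monom ?a" "is_monom ?b"
        using Suc.prems(2) is_monom_merge by metis+
      moreover have "monom_supp ?a \<subseteq> {..<n}" "monom_supp ?b \<subseteq> {..<n}"
      proof -
        have "2 * j < Suc n \<Longrightarrow> j < n" "2 * j + 1 < Suc n \<Longrightarrow> j < n" for j
          using \<open>1 \<le> n\<close> by linarith+
        with Suc.prems(1) show "monom_supp ?a \<subseteq> {..<n}" "monom_supp ?b \<subseteq> {..<n}"
          unfolding monom_supp_def by blast+
      qed
      ultimately show ?thesis
        using merge Suc.IH e by metis
    qed
  qed
qed

definition genus_of :: "(nat list \<Rightarrow> sfun) \<Rightarrow> nat list \<Rightarrow> complex" where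
  "genus_of p mu = p mu ((\<lambda>_. 0)(0 := sum_list mu))"

lemma full_sequence_vanishes:
  assumes "full_sequence p" and "is_partition lam"
    and "\<not> (is_monom e \<and> monom_deg e = sum_list lam)"
  shows "p lam e = 0"
  using assms by (auto simp: full_sequence_def homog_sym_def)

lemma binomial_type_unit:
  assumes "full_sequence p" and "binomial_type p"
  shows "p [] (\<lambda>_. 0) = 1"
proof -
  have nil: "is_partition []" by (simp add: is_partition_def)
  have "exact_degree (p []) []"
    using assms(1) nil by (simp add: full_sequence_def)
  moreover have "monom_of [] = (\<lambda>_. 0)"
    by (simp add: monom_of_def part_get_def fun_eq_iff)
  ultimately have "p [] (\<lambda>_. 0) \<noteq> 0"
    by (simp add: exact_degree_def mcoeff_def)
  moreover have "p [] (\<lambda>_. 0) = p [] (\<lambda>_. 0) * p [] (\<lambda>_. 0)"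
  proof -
    have "merge_monom (\<lambda>_. 0) (\<lambda>_. 0) = (\<lambda>_. 0)"
      by (simp add: merge_monom_def)
    moreover have "{\<alpha>. vec_le \<alpha> []} = {[]}"
      by (auto simp: vec_le_def)
    moreover have "p [] (merge_monom (\<lambda>_. 0) (\<lambda>_. 0)) = (\<Sum>\<alpha>\<in>{\<alpha>. vec_le \<alpha> []}.
        of_nat (vec_binom [] \<alpha>) * p (sort_part \<alpha>) (\<lambda>_. 0) * p (sort_part (vec_minus [] \<alpha>)) (\<lambda>_. 0))"
      using assms(2) nil unfolding binomial_type_def by blast
    ultimately show ?thesis
      by (simp add: vec_binom_def vec_minus_def sort_part_def)
  qed
  ultimately show ?thesis by simp
qed

lemma quasi_genus_genus_of:
  assumes "full_sequence p" and "binomial_type p"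
  shows "quasi_genus (genus_of p)"
  using binomial_type_unit[OF assms] by (simp add: quasi_genus_def genus_of_def fun_upd_idem)

lemma associated_imp_binomial_type:
  assumes "associated p G"
  shows "binomial_type p"
proof -
  have "p mu = assoc_sfun G mu" if "is_partition mu" for mu
    using assms that by (simp add: associated_iff_assoc_sfun)
  then show ?thesis
    by (simp add: binomial_type_def is_partition_sort_part assoc_sfun_sort_part assoc_sfun_merge)
qed

lemma binomial_type_imp_associated:
  assumes full: "full_sequence p" and binom: "binomial_type p"
  shows "associated p (genus_of p)"
proof -
  have G0: "genus_of p [] = 1"
    using quasi_genus_genus_of[OF assms] by (simp add: quasi_genus_def)
  have "p lam e = assoc_sfun (genus_of p) lam e" if "is_monom e" "is_partition lam" for lam e
    using that
  proof (induction e arbitrary: lam rule: monom_merge_induct)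
    case (single_var e)
    show ?case
    proof (cases "sum_list lam = e 0")
      case True
      then have "e = (\<lambda>_. 0)(0 := sum_list lam)"
        using single_var.hyps by (force simp: monom_supp_def fun_eq_iff)
      then show ?thesis
        using True single_var.prems G0
        by (simp add: assoc_sfun_single_var[OF single_var.hyps] genus_of_def sort_part_partition)
    next
      case False
      then show ?thesis
        using full_sequence_vanishes[OF full single_var.prems] monom_deg_single_var[OF single_var.hyps]
        by (simp add: assoc_sfun_single_var[of e "genus_of p", OF single_var.hyps G0])
    qed
  next
    case (merge a b)
    then show ?case
      using binom
      by (simp add: binomial_type_def is_partition_sort_part assoc_sfun_sort_part assoc_sfun_merge)
  qed
  moreover have "p lam e = assoc_sfun (genus_of p) lam e" if "is_partition lam" "\<not> is_monom e" for lam e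
    using full_sequence_vanishes[OF full that(1)] that(2) by (simp add: assoc_sfun_def)
  ultimately show ?thesis
    unfolding associated_iff_assoc_sfun by blast
qed

theorem mainTheorem14:
  fixes p :: "nat list \<Rightarrow> sfun"
  assumes "full_sequence p"
  shows "binomial_type p \<longleftrightarrow> (\<exists>G. quasi_genus G \<and> associated p G)"
proof
  assume "binomial_type p"
  then show "\<exists>G. quasi_genus G \<and> associated p G"
    using quasi_genus_genus_of[OF assms] binomial_type_imp_associated[OF assms] by blast
next
  assume "\<exists>G. quasi_genus G \<and> associated p G"
  then show "binomial_type p" using associated_imp_binomial_type by blast
qed

end
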